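(* Let $a_0,a_1,a_2,b_0,b_1$ be real numbers with $a_1\neq0$ and $a_2\neq0$, and let $(T(n,k))_{n\ge 0,\,k\in\mathbb{Z}}$ be defined by $T(0,0)=1$, $T(n,k)=0$ whenever $k<0$ or $k>n$, and \[ T(n,k)=(a_2n+a_1k+a_0)\,T(n-1,k)+(b_1k+b_0)\,T(n-1,k-1)\qquad(n\ge1). \] Then for all integers $0\le k\le n$, \[ T(n,k)=\frac{\prod_{i=1}^{k}(b_0+ib_1)}{a_1^k\,k!}\sum_{j=0}^{k}(-1)^{k-j}\binom{k}{j}\prod_{r=1}^{n}(a_0+a_1j+ra_2). \]
   Context: Empty products equal $1$. *)

theory Defs
  imports Complex_Main
begin

end

theory Submission
  imports Defs
begin

(* With g^(k) the k-th forward difference of g at 0 and f_n(j) = prod_{r=1..n} (a0 + a1 j + r a2),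
   the identities f_{n+1}(j) = (a0 + (n+1) a2 + a1 j) f_n(j) and
   (j g(j))^(k) = k (g^(k-1) + g^(k)) show that S(n,k) = f_n^(k) satisfies
   S(n+1,k) = (a0 + (n+1) a2 + a1 k) S(n,k) + a1 k S(n,k-1), and S(n,k) = 0 for k > n because
   f_n is a polynomial of degree n in j. Multiplying by prod_{i=1..k} (b0 + i b1) / (a1^k k!)
   turns this into the recurrence defining T, which determines T uniquely. *)

definition forward_difference :: "nat \<Rightarrow> (nat \<Rightarrow> 'a::comm_ring_1) \<Rightarrow> 'a" where
  "forward_difference k g = (\<Sum>j=0..k. (-1) ^ (k - j) * of_nat (k choose j) * g j)"

lemma forward_difference_linear:
  "forward_difference k (\<lambda>j. c * g j + d * h j) = c * forward_difference k g + d * forward_difference k h"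
  unfolding forward_difference_def by (simp add: sum.distrib sum_distrib_left algebra_simps)

lemma forward_difference_const: "forward_difference (Suc m) (\<lambda>_. c) = 0"
proof -
  have "(\<Sum>j\<le>Suc m. of_nat (Suc m choose j) * 1 ^ j * (-1) ^ (Suc m - j)) = (1 + (-1::'a)) ^ Suc m"
    by (rule binomial_ring[symmetric])
  then show ?thesis
    unfolding forward_difference_def by (simp add: atLeast0AtMost mult.commute flip: sum_distrib_left)
qed

lemma signed_binomial_times_index:
  fixes x :: "'a::comm_ring_1"
  assumes "j \<le> Suc m"
  shows "(-1) ^ (Suc m - j) * of_nat (Suc m choose j) * (of_nat j * x) =
    of_nat (Suc m) * ((-1) ^ (m - j) * of_nat (m choose j) * x + (-1) ^ (Suc m - j) * of_nat (Suc m choose j) * x)"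
proof (cases j)
  case 0
  then show ?thesis by simp
next
  case (Suc i)
  have absorb: "of_nat (Suc i) * of_nat (Suc m choose Suc i) = (of_nat (Suc m) * of_nat (m choose i) :: 'a)"
    by (metis Suc_times_binomial of_nat_mult)
  have sign: "(-1) ^ (m - Suc i) * of_nat (m choose Suc i) = - ((-1) ^ (m - i) * of_nat (m choose Suc i) :: 'a)"
  proof (cases "i < m")
    case True
    then have "m - i = Suc (m - Suc i)" by simp
    then show ?thesis by simp
  next
    case False
    then show ?thesis by (simp add: binomial_eq_0)
  qed
  have "(-1) ^ (Suc m - j) * of_nat (Suc m choose j) * (of_nat j * x) =
      (-1) ^ (m - i) * (of_nat (Suc i) * of_nat (Suc m choose Suc i)) * x"
    unfolding Suc by (simp only: diff_Suc_Suc ac_simps)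
  also have "\<dots> = of_nat (Suc m) * ((-1) ^ (m - i) * of_nat (m choose i) * x)"
    unfolding absorb by (simp only: ac_simps)
  also have "\<dots> = of_nat (Suc m) * ((-1) ^ (m - Suc i) * of_nat (m choose Suc i) * x
      + (-1) ^ (m - i) * of_nat (Suc m choose Suc i) * x)"
    using sign by (simp add: algebra_simps)
  finally show ?thesis
    unfolding Suc by simp
qed

lemma forward_difference_mult_index:
  "forward_difference (Suc m) (\<lambda>j. of_nat j * g j) =
    of_nat (Suc m) * (forward_difference m g + forward_difference (Suc m) g)"
proof -
  have mult_index: "forward_difference (Suc m) (\<lambda>j. of_nat j * g j) = (\<Sum>j=0..Suc m. of_nat (Suc m) *
      ((-1) ^ (m - j) * of_nat (m choose j) * g j + (-1) ^ (Suc m - j) * of_nat (Suc m choose j) * g j))"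
    unfolding forward_difference_def by (rule sum.cong) (simp_all add: signed_binomial_times_index)
  have extend: "forward_difference m g = (\<Sum>j=0..Suc m. (-1) ^ (m - j) * of_nat (m choose j) * g j)"
    unfolding forward_difference_def by (simp add: binomial_eq_0)
  show ?thesis
    by (simp only: mult_index extend forward_difference_def[of "Suc m" g] sum.distrib[symmetric] sum_distrib_left)
qed

definition arith_prog_prod :: "'a::comm_ring_1 \<Rightarrow> 'a \<Rightarrow> 'a \<Rightarrow> nat \<Rightarrow> nat \<Rightarrow> 'a" where
  "arith_prog_prod a0 a1 a2 n j = (\<Prod>r=1..n. a0 + a1 * of_nat j + of_nat r * a2)"

lemma arith_prog_prod_Suc:
  "arith_prog_prod a0 a1 a2 (Suc n) j =
    (a0 + of_nat (Suc n) * a2) * arith_prog_prod a0 a1 a2 n j + a1 * (of_nat j * arith_prog_prod a0 a1 a2 n j)"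
  unfolding arith_prog_prod_def by (simp add: prod.nat_ivl_Suc' algebra_simps)

(* For k = 0 the last term vanishes, so the truncated k - 1 is harmless. *)
lemma forward_difference_arith_prog_prod_Suc:
  "forward_difference k (arith_prog_prod a0 a1 a2 (Suc n)) =
    (a0 + of_nat (Suc n) * a2 + a1 * of_nat k) * forward_difference k (arith_prog_prod a0 a1 a2 n)
    + a1 * of_nat k * forward_difference (k - 1) (arith_prog_prod a0 a1 a2 n)"
proof (cases k)
  case 0
  then show ?thesis
    by (simp add: forward_difference_def arith_prog_prod_Suc)
next
  case (Suc m)
  have "forward_difference k (arith_prog_prod a0 a1 a2 (Suc n)) =
      (a0 + of_nat (Suc n) * a2) * forward_difference k (arith_prog_prod a0 a1 a2 n)
      + a1 * forward_difference k (\<lambda>j. of_nat j * arith_prog_prod a0 a1 a2 n j)"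
    unfolding arith_prog_prod_Suc forward_difference_linear ..
  then show ?thesis
    unfolding Suc forward_difference_mult_index by (simp add: algebra_simps)
qed

lemma forward_difference_arith_prog_prod_eq_0:
  "n < k \<Longrightarrow> forward_difference k (arith_prog_prod a0 a1 a2 n) = 0"
proof (induction n arbitrary: k)
  case 0
  then obtain m where "k = Suc m"
    using not0_implies_Suc by blast
  moreover have "arith_prog_prod a0 a1 a2 0 = (\<lambda>_. 1)"
    by (simp add: arith_prog_prod_def fun_eq_iff)
  ultimately show ?case
    by (simp add: forward_difference_const)
next
  case (Suc n)
  then show ?case
    by (simp add: forward_difference_arith_prog_prod_Suc)
qed

definition triangle_closed_form :: "'a::field_char_0 \<Rightarrow> 'a \<Rightarrow> 'a \<Rightarrow> 'a \<Rightarrow> 'a \<Rightarrow> nat \<Rightarrow> nat \<Rightarrow> 'a" where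
  "triangle_closed_form a0 a1 a2 b0 b1 n k =
    (\<Prod>i=1..k. b0 + of_nat i * b1) / (a1 ^ k * fact k) * forward_difference k (arith_prog_prod a0 a1 a2 n)"

lemma triangle_closed_form_0_0: "triangle_closed_form a0 a1 a2 b0 b1 0 0 = 1"
  by (simp add: triangle_closed_form_def forward_difference_def arith_prog_prod_def)

lemma triangle_closed_form_eq_0: "n < k \<Longrightarrow> triangle_closed_form a0 a1 a2 b0 b1 n k = 0"
  by (simp add: triangle_closed_form_def forward_difference_arith_prog_prod_eq_0)

lemma triangle_closed_form_Suc_0:
  "triangle_closed_form a0 a1 a2 b0 b1 (Suc n) 0 =
    (a2 * of_nat (Suc n) + a0) * triangle_closed_form a0 a1 a2 b0 b1 n 0"
  by (simp add: triangle_closed_form_def forward_difference_arith_prog_prod_Suc algebra_simps)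

lemma triangle_closed_form_Suc_Suc:
  assumes "a1 \<noteq> 0"
  shows "triangle_closed_form a0 a1 a2 b0 b1 (Suc n) (Suc m) =
    (a2 * of_nat (Suc n) + a1 * of_nat (Suc m) + a0) * triangle_closed_form a0 a1 a2 b0 b1 n (Suc m)
    + (b1 * of_nat (Suc m) + b0) * triangle_closed_form a0 a1 a2 b0 b1 n m"
proof -
  define c where "c k = (\<Prod>i=1..k. b0 + of_nat i * b1) / (a1 ^ k * fact k)" for k
  define D where "D k = forward_difference k (arith_prog_prod a0 a1 a2 n)" for k
  have c_Suc: "c (Suc m) * (a1 * of_nat (Suc m)) = c m * (b1 * of_nat (Suc m) + b0)"
  proof -
    have "c (Suc m) = c m * (b1 * of_nat (Suc m) + b0) / (a1 * of_nat (Suc m))"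
      unfolding c_def by (simp add: prod.nat_ivl_Suc' algebra_simps del: of_nat_Suc)
    then show ?thesis
      using assms by (simp del: of_nat_Suc)
  qed
  have "triangle_closed_form a0 a1 a2 b0 b1 (Suc n) (Suc m) =
      c (Suc m) * ((a0 + of_nat (Suc n) * a2 + a1 * of_nat (Suc m)) * D (Suc m) + a1 * of_nat (Suc m) * D m)"
    unfolding triangle_closed_form_def c_def D_def forward_difference_arith_prog_prod_Suc by simp
  also have "\<dots> = (a2 * of_nat (Suc n) + a1 * of_nat (Suc m) + a0) * (c (Suc m) * D (Suc m))
      + c (Suc m) * (a1 * of_nat (Suc m)) * D m"
    by (simp only: algebra_simps)
  also have "\<dots> = (a2 * of_nat (Suc n) + a1 * of_nat (Suc m) + a0) * (c (Suc m) * D (Suc m))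
      + (b1 * of_nat (Suc m) + b0) * (c m * D m)"
    unfolding c_Suc by (simp only: ac_simps)
  finally show ?thesis
    unfolding triangle_closed_form_def c_def D_def .
qed

lemma triangular_recurrence_unique:
  fixes T :: "nat \<Rightarrow> int \<Rightarrow> 'a::semiring_0" and G u v :: "nat \<Rightarrow> nat \<Rightarrow> 'a"
  assumes "T 0 0 = G 0 0"
    and T_eq_0: "\<And>n k. k < 0 \<or> k > int n \<Longrightarrow> T n k = 0"
    and G_eq_0: "\<And>n k. n < k \<Longrightarrow> G n k = 0"
    and T_Suc: "\<And>n k. k \<le> Suc n \<Longrightarrow> T (Suc n) (int k) = u n k * T n (int k) + v n k * T n (int k - 1)"
    and G_Suc_0: "\<And>n. G (Suc n) 0 = u n 0 * G n 0"
    and G_Suc_Suc: "\<And>n k. G (Suc n) (Suc k) = u n (Suc k) * G n (Suc k) + v n (Suc k) * G n k"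
  shows "T n (int k) = G n k"
proof (induction n arbitrary: k)
  case 0
  show ?case
    using assms(1) T_eq_0[of "int k" 0] G_eq_0[of 0 k] by (cases k) auto
next
  case (Suc n)
  show ?case
  proof (cases "k \<le> Suc n")
    case True
    show ?thesis
    proof (cases k)
      case 0
      then show ?thesis
        using T_Suc[of 0 n] T_eq_0[of "-1" n] G_Suc_0 Suc.IH[of 0] by simp
    next
      case (Suc m)
      then have "int k - 1 = int m"
        by simp
      then show ?thesis
        using T_Suc[OF True] G_Suc_Suc Suc.IH \<open>k = Suc m\<close> by metis
    qed
  next
    case False
    then show ?thesis
      using T_eq_0[of "int k" "Suc n"] G_eq_0[of "Suc n" k] by simp
  qed
qed

theorem mainTheorem3:
  fixes a0 a1 a2 b0 b1 :: real and T :: "nat \<Rightarrow> int \<Rightarrow> real"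
  assumes "a1 \<noteq> 0" and "a2 \<noteq> 0"
    and "T 0 0 = 1"
    and "\<And>n k. k < 0 \<or> k > int n \<Longrightarrow> T n k = 0"
    and "\<And>n k. n \<ge> 1 \<Longrightarrow> 0 \<le> k \<Longrightarrow> k \<le> int n \<Longrightarrow>
           T n k = (a2 * real n + a1 * of_int k + a0) * T (n - 1) k
                   + (b1 * of_int k + b0) * T (n - 1) (k - 1)"
    and "k \<le> n"
  shows "T n (int k) =
    (\<Prod>i=1..k. b0 + real i * b1) / (a1 ^ k * fact k) *
    (\<Sum>j=0..k. (-1) ^ (k - j) * real (k choose j) *
        (\<Prod>r=1..n. a0 + a1 * real j + real r * a2))"
proof -
  have "T n (int k) = triangle_closed_form a0 a1 a2 b0 b1 n k"
  proof (rule triangular_recurrence_unique)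
    show "T (Suc n) (int k) = (a2 * real (Suc n) + a1 * real k + a0) * T n (int k)
        + (b1 * real k + b0) * T n (int k - 1)" if "k \<le> Suc n" for n k
      using assms(5)[of "Suc n" "int k"] that by simp
  qed (use assms(1,3,4) in \<open>simp_all add: triangle_closed_form_0_0 triangle_closed_form_eq_0
      triangle_closed_form_Suc_0 triangle_closed_form_Suc_Suc\<close>)
  then show ?thesis
    unfolding triangle_closed_form_def forward_difference_def arith_prog_prod_def .
qed

end
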